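(* Let $\omega\in(0,1/2)$ and $1/\{2(1-\omega)\}<\gamma<1$. Then $$\sup_{\mathbf u\in[0,1]^d:\ g(\mathbf u)\ge n^{-\gamma}}\Big|\int_{[0,1]^d}\frac{g(\mathbf w)^\omega}{g(\mathbf u)^\omega}\,\mathrm d\mu_{n,\mathbf u}(\mathbf w)-1\Big|=\mathrm O\{n^{-(1-\gamma)/2}\log n\},\qquad n\to\infty.$$
   Context: $d\ge2$; $g(\mathbf u)=\bigwedge_{j=1}^d\{u_j\wedge\bigvee_{k\ne j}(1-u_k)\}$ for $\mathbf u\in[0,1]^d$ ($\wedge$ = min, $\vee$ = max). For $\mathbf u\in[0,1]^d$, $\mu_{n,\mathbf u}$ is the law of $(S_1/n,\dots,S_d/n)$ with $S_1,\dots,S_d$ independent, $S_j\sim\mathrm{Bin}(n,u_j)$. *)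

theory Defs
  imports "HOL-Probability.Probability"
begin

definition gfun :: "('d::finite \<Rightarrow> real) \<Rightarrow> real" where
  "gfun u = (MIN j. min (u j) (MAX k \<in> UNIV - {j}. 1 - u k))"

definition mu :: "nat \<Rightarrow> ('d::finite \<Rightarrow> real) \<Rightarrow> ('d \<Rightarrow> real) pmf" where
  "mu n u = map_pmf (\<lambda>S j. real (S j) / real n)
              (Pi_pmf UNIV 0 (\<lambda>j. binomial_pmf n (u j)))"

end

theory Submission
  imports Defs
begin

text \<open>Since \<open>\<bar>x powr \<omega> - 1\<bar> \<le> \<bar>x - 1\<bar>\<close> for \<open>x \<ge> 0\<close>, it suffices to bound
  \<open>E \<bar>g(W) - g(u)\<bar> / g(u)\<close>. As a min of maxes of the coordinates and their complements, \<open>g\<close>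
  moves by at most the sum over \<open>k\<close> of \<open>\<bar>W k - u k\<bar>\<close> for the coordinates that can be binding
  (\<open>u k\<close> or \<open>1 - u k\<close> at most \<open>b = g(u)\<close>) plus the amounts by which \<open>W k\<close> or \<open>1 - W k\<close> falls
  below \<open>b\<close>. Binomial second moments bound each expected term by \<open>O(sqrt (b/n) + 1/n)\<close>, and
  \<open>b \<ge> n powr -\<gamma>\<close> turns this into \<open>O(n powr (-(1 - \<gamma>)/2))\<close>.\<close>

lemma abs_powr_div_powr_minus_one_le:
  fixes a b w :: real
  assumes "0 \<le> a" and "0 < b" and "0 < w" "w < 1"
  shows "\<bar>a powr w / b powr w - 1\<bar> \<le> \<bar>a - b\<bar> / b"
proof -
  define x where "x = a / b"
  have "x \<ge> 0" using assms by (simp add: x_def)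
  have ratio: "a powr w / b powr w = x powr w" using assms by (simp add: x_def powr_divide)
  have "\<bar>a - b\<bar> / b = \<bar>(a - b) / b\<bar>" using assms by simp
  then have rel: "\<bar>a - b\<bar> / b = \<bar>x - 1\<bar>" using assms by (simp add: x_def diff_divide_distrib)
  have "\<bar>x powr w - 1\<bar> \<le> \<bar>x - 1\<bar>"
  proof (cases "x \<ge> 1")
    case True
    have "x powr w \<le> x powr 1" using True assms by (intro powr_mono) auto
    moreover have "1 \<le> x powr w" using True assms by (intro ge_one_powr_ge_zero) auto
    ultimately show ?thesis using True by auto
  next
    case False
    have "x powr w \<le> 1" using False assms \<open>x \<ge> 0\<close> by (intro powr_le1) auto
    moreover have "x powr 1 \<le> x powr w"
      using False assms \<open>x \<ge> 0\<close> by (intro powr_mono') auto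
    ultimately show ?thesis using False \<open>x \<ge> 0\<close> by (cases "x = 0") auto
  qed
  then show ?thesis using ratio rel by simp
qed

lemma Max_remove_ge:
  fixes f :: "'d::finite \<Rightarrow> real"
  shows "k \<noteq> j \<Longrightarrow> f k \<le> (MAX k \<in> UNIV - {j}. f k)"
  by (intro Max_ge) auto

lemma Max_remove_attained:
  fixes f :: "'d::finite \<Rightarrow> real"
  assumes "CARD('d) \<ge> 2"
  shows "\<exists>k. k \<noteq> j \<and> (MAX k \<in> UNIV - {j}. f k) = f k"
proof -
  have "UNIV \<noteq> {j}"
  proof
    assume "UNIV = {j}"
    then have "CARD('d) = card {j}" by (rule arg_cong)
    with assms show False by simp
  qed
  then have "UNIV - {j} \<noteq> {}" by auto
  then have "(MAX k \<in> UNIV - {j}. f k) \<in> f ` (UNIV - {j})" by (intro Max_in) auto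
  then show ?thesis by auto
qed

lemma gfun_le: "gfun v \<le> min (v j) (MAX k \<in> UNIV - {j}. 1 - v k)"
  unfolding gfun_def by (intro Min_le) auto

lemma gfun_attained: "\<exists>j. gfun v = min (v j) (MAX k \<in> UNIV - {j}. 1 - v k)"
proof -
  have "gfun v \<in> range (\<lambda>j. min (v j) (MAX k \<in> UNIV - {j}. 1 - v k))"
    unfolding gfun_def by (intro Min_in) auto
  then show ?thesis by auto
qed

lemma gfun_nonneg:
  fixes v :: "'d::finite \<Rightarrow> real"
  assumes "CARD('d) \<ge> 2" and "\<And>j. 0 \<le> v j \<and> v j \<le> 1"
  shows "0 \<le> gfun v"
proof -
  obtain j where j: "gfun v = min (v j) (MAX k \<in> UNIV - {j}. 1 - v k)"
    using gfun_attained by blast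
  obtain k where "(MAX k \<in> UNIV - {j}. 1 - v k) = 1 - v k"
    using Max_remove_attained[OF assms(1)] by blast
  then show ?thesis using j assms(2)[of j] assms(2)[of k] by simp
qed

text \<open>The share of coordinate \<open>k\<close> in the deviation of \<open>gfun\<close>, for \<open>p = u k\<close>, \<open>b = gfun u\<close>
  and \<open>x = w k\<close>.\<close>
definition coord_dev :: "real \<Rightarrow> real \<Rightarrow> real \<Rightarrow> real" where
  "coord_dev p b x = (if p \<le> b \<or> 1 - p \<le> b then \<bar>x - p\<bar> else 0) + max 0 (b - x)
      + (if b \<le> 1 - p then max 0 (b - (1 - x)) else 0)"

lemma coord_dev_nonneg: "0 \<le> coord_dev p b x"
  unfolding coord_dev_def by auto

lemma coord_dev_le_sum:
  fixes u w :: "'d::finite \<Rightarrow> real"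
  shows "coord_dev (u k) b (w k) \<le> (\<Sum>k\<in>UNIV. coord_dev (u k) b (w k))"
  by (rule member_le_sum) (auto simp: coord_dev_nonneg)

lemma gfun_le_add_sum_coord_dev:
  fixes u w :: "'d::finite \<Rightarrow> real"
  assumes "CARD('d) \<ge> 2"
  shows "gfun w \<le> gfun u + (\<Sum>k\<in>UNIV. coord_dev (u k) (gfun u) (w k))"
proof -
  define b where "b = gfun u"
  obtain j where j: "b = min (u j) (MAX k \<in> UNIV - {j}. 1 - u k)"
    using gfun_attained unfolding b_def by blast
  have "gfun w \<le> b + (\<Sum>k\<in>UNIV. coord_dev (u k) b (w k))"
  proof (cases "b = u j")
    case True
    have "gfun w \<le> w j" using gfun_le[of w j] by simp
    moreover have "\<bar>w j - u j\<bar> \<le> coord_dev (u j) b (w j)"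
      using True unfolding coord_dev_def by auto
    ultimately show ?thesis using coord_dev_le_sum[of u j b w] True by linarith
  next
    case False
    then have b: "b = (MAX k \<in> UNIV - {j}. 1 - u k)" using j by linarith
    obtain k where k: "k \<noteq> j" "(MAX k \<in> UNIV - {j}. 1 - w k) = 1 - w k"
      using Max_remove_attained[OF assms] by blast
    have "1 - u k \<le> b" using Max_remove_ge[OF k(1)] b by simp
    then have "\<bar>w k - u k\<bar> \<le> coord_dev (u k) b (w k)"
      unfolding coord_dev_def by auto
    moreover have "gfun w \<le> 1 - w k" using gfun_le[of w j] k by simp
    ultimately show ?thesis using coord_dev_le_sum[of u k b w] \<open>1 - u k \<le> b\<close> by linarith
  qed
  then show ?thesis by (simp add: b_def)
qed

lemma gfun_ge_diff_sum_coord_dev: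
  fixes u w :: "'d::finite \<Rightarrow> real"
  assumes "CARD('d) \<ge> 2"
  shows "gfun u - (\<Sum>k\<in>UNIV. coord_dev (u k) (gfun u) (w k)) \<le> gfun w"
proof -
  define b where "b = gfun u"
  obtain j where j: "gfun w = min (w j) (MAX k \<in> UNIV - {j}. 1 - w k)"
    using gfun_attained by blast
  have bj: "b \<le> u j" "b \<le> (MAX k \<in> UNIV - {j}. 1 - u k)"
    using gfun_le[of u j] unfolding b_def by auto
  have "b - (\<Sum>k\<in>UNIV. coord_dev (u k) b (w k)) \<le> gfun w"
  proof (cases "gfun w = w j")
    case True
    have "max 0 (b - w j) \<le> coord_dev (u j) b (w j)"
      unfolding coord_dev_def by auto
    then show ?thesis using coord_dev_le_sum[of u j b w] True by linarith
  next
    case False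
    then have gw: "gfun w = (MAX k \<in> UNIV - {j}. 1 - w k)" using j by linarith
    obtain k where k: "k \<noteq> j" "(MAX k \<in> UNIV - {j}. 1 - u k) = 1 - u k"
      using Max_remove_attained[OF assms] by blast
    have "b \<le> 1 - u k" using bj k by simp
    then have "max 0 (b - (1 - w k)) \<le> coord_dev (u k) b (w k)"
      unfolding coord_dev_def by auto
    moreover have "1 - w k \<le> gfun w" using Max_remove_ge[OF k(1)] gw by simp
    ultimately show ?thesis using coord_dev_le_sum[of u k b w] by linarith
  qed
  then show ?thesis by (simp add: b_def)
qed

lemma abs_gfun_diff_le_sum_coord_dev:
  fixes u w :: "'d::finite \<Rightarrow> real"
  assumes "CARD('d) \<ge> 2"
  shows "\<bar>gfun w - gfun u\<bar> \<le> (\<Sum>k\<in>UNIV. coord_dev (u k) (gfun u) (w k))"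
  using gfun_le_add_sum_coord_dev[OF assms, of w u] gfun_ge_diff_sum_coord_dev[OF assms, of u w]
  by (simp add: abs_le_iff)

lemma expectation_abs_le_sqrt_second_moment:
  fixes M :: "'a pmf" and Z :: "'a \<Rightarrow> real"
  assumes "finite (set_pmf M)"
  shows "measure_pmf.expectation M (\<lambda>x. \<bar>Z x\<bar>) \<le> sqrt (measure_pmf.expectation M (\<lambda>x. (Z x)\<^sup>2))"
proof (rule real_le_rsqrt)
  have int: "integrable M f" for f :: "'a \<Rightarrow> real"
    by (rule integrable_measure_pmf_finite[OF assms])
  have "0 \<le> measure_pmf.variance M (\<lambda>x. \<bar>Z x\<bar>)"
    by (rule measure_pmf.variance_positive)
  also have "\<dots> = measure_pmf.expectation M (\<lambda>x. \<bar>Z x\<bar>\<^sup>2) - (measure_pmf.expectation M (\<lambda>x. \<bar>Z x\<bar>))\<^sup>2"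
    by (intro measure_pmf.variance_eq int)
  finally show "(measure_pmf.expectation M (\<lambda>x. \<bar>Z x\<bar>))\<^sup>2 \<le> measure_pmf.expectation M (\<lambda>x. (Z x)\<^sup>2)"
    by simp
qed

lemma expectation_pos_part_le:
  fixes M :: "'a pmf" and Y :: "'a \<Rightarrow> real"
  assumes fin: "finite (set_pmf M)" and b: "0 < b" "b \<le> q"
    and Y_nonneg: "\<And>x. x \<in> set_pmf M \<Longrightarrow> 0 \<le> Y x"
    and second_moment: "measure_pmf.expectation M (\<lambda>x. (Y x - q)\<^sup>2) \<le> q * s"
  shows "measure_pmf.expectation M (\<lambda>x. max 0 (b - Y x)) \<le> 2 * sqrt (b * s) + 2 * s"
proof -
  have int: "integrable M f" for f :: "'a \<Rightarrow> real"
    by (rule integrable_measure_pmf_finite[OF fin])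
  have "0 \<le> measure_pmf.expectation M (\<lambda>x. (Y x - q)\<^sup>2)" by simp
  then have "0 \<le> s" using second_moment b by (smt (verit) zero_le_mult_iff)
  show ?thesis
  proof (cases "q \<le> 2 * b")
    case True
    have "measure_pmf.expectation M (\<lambda>x. max 0 (b - Y x))
          \<le> measure_pmf.expectation M (\<lambda>x. \<bar>Y x - q\<bar>)"
      using b by (intro integral_mono int) auto
    also have "\<dots> \<le> sqrt (measure_pmf.expectation M (\<lambda>x. (Y x - q)\<^sup>2))"
      by (rule expectation_abs_le_sqrt_second_moment[OF fin])
    also have "\<dots> \<le> sqrt (2 * (b * s))"
    proof (rule real_sqrt_le_mono)
      have "q * s \<le> 2 * b * s" using True \<open>0 \<le> s\<close> by (rule mult_right_mono)
      then show "measure_pmf.expectation M (\<lambda>x. (Y x - q)\<^sup>2) \<le> 2 * (b * s)"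
        using second_moment by simp
    qed
    also have "\<dots> \<le> 2 * sqrt (b * s)"
      using b \<open>0 \<le> s\<close> by (intro real_le_lsqrt) (auto simp: power_mult_distrib)
    finally show ?thesis using \<open>0 \<le> s\<close> by linarith
  next
    case False
    then have q: "0 < q" using b by linarith
    text \<open>Chebyshev: \<open>Y < b\<close> forces \<open>\<bar>Y - q\<bar> > q/2\<close>.\<close>
    have pointwise: "max 0 (b - Y x) \<le> 4 * b / q\<^sup>2 * (Y x - q)\<^sup>2" if "x \<in> set_pmf M" for x
    proof (cases "Y x < b")
      case True
      then have "(q / 2)\<^sup>2 \<le> (q - Y x)\<^sup>2"
        using False q by (intro power_mono) auto
      then have "(q / 2)\<^sup>2 \<le> (Y x - q)\<^sup>2" by (simp add: power2_commute)
      then have "4 * b / q\<^sup>2 * (q / 2)\<^sup>2 \<le> 4 * b / q\<^sup>2 * (Y x - q)\<^sup>2"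
        using b by (intro mult_left_mono) auto
      moreover have "4 * b / q\<^sup>2 * (q / 2)\<^sup>2 = b" using q by (simp add: field_simps power2_eq_square)
      ultimately show ?thesis using Y_nonneg[OF that] b by linarith
    next
      case False
      then show ?thesis using b by simp
    qed
    have "measure_pmf.expectation M (\<lambda>x. max 0 (b - Y x))
          \<le> measure_pmf.expectation M (\<lambda>x. 4 * b / q\<^sup>2 * (Y x - q)\<^sup>2)"
      by (intro integral_mono_AE int AE_pmfI pointwise)
    also have "\<dots> = 4 * b / q\<^sup>2 * measure_pmf.expectation M (\<lambda>x. (Y x - q)\<^sup>2)" by simp
    also have "\<dots> \<le> 4 * b / q\<^sup>2 * (q * s)"
      using second_moment b by (intro mult_left_mono) auto
    also have "\<dots> = (4 * b / q) * s" using q by (simp add: field_simps power2_eq_square)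
    also have "\<dots> \<le> 2 * s"
      using False q \<open>0 \<le> s\<close> by (intro mult_right_mono) (auto simp: field_simps)
    finally have "measure_pmf.expectation M (\<lambda>x. max 0 (b - Y x)) \<le> 2 * s" .
    moreover have "0 \<le> sqrt (b * s)" using b \<open>0 \<le> s\<close> by simp
    ultimately show ?thesis by linarith
  qed
qed

lemma expectation_binomial_pmf_Suc:
  fixes h :: "nat \<Rightarrow> real"
  assumes p: "p \<in> {0..1}"
  shows "measure_pmf.expectation (binomial_pmf (Suc n) p) h =
     p * measure_pmf.expectation (binomial_pmf n p) (\<lambda>k. h (Suc k))
       + (1 - p) * measure_pmf.expectation (binomial_pmf n p) h"
proof -
  have eq: "binomial_pmf (Suc n) p =
      bernoulli_pmf p \<bind> (\<lambda>b. map_pmf (\<lambda>k. (if b then 1 else 0) + k) (binomial_pmf n p))"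
    using p by (simp add: binomial_pmf_Suc map_pmf_def)
  have "measure_pmf.expectation (binomial_pmf (Suc n) p) h =
      (\<Sum>b\<in>UNIV. pmf (bernoulli_pmf p) b *\<^sub>R
        measure_pmf.expectation (map_pmf (\<lambda>k. (if b then 1 else 0) + k) (binomial_pmf n p)) h)"
    unfolding eq using p
    by (intro pmf_expectation_bind) (auto intro!: finite_imageI finite_set_pmf_binomial_pmf)
  then show ?thesis using p by (simp add: UNIV_bool)
qed

lemma expectation_binomial_pmf_moments:
  assumes p: "p \<in> {0..1}"
  shows "measure_pmf.expectation (binomial_pmf n p) real = n * p \<and>
         measure_pmf.expectation (binomial_pmf n p) (\<lambda>k. (real k)\<^sup>2) = n * p * (1 - p) + (n * p)\<^sup>2"
proof (induction n)
  case 0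
  then show ?case using p by (simp add: binomial_pmf_0)
next
  case (Suc n)
  have "(\<lambda>k. (real (Suc k))\<^sup>2) = (\<lambda>k. (real k)\<^sup>2 + (2 * real k + 1))"
    by (auto simp: power2_eq_square algebra_simps)
  then have sq: "measure_pmf.expectation (binomial_pmf n p) (\<lambda>k. (real (Suc k))\<^sup>2)
      = n * p * (1 - p) + (n * p)\<^sup>2 + 2 * (n * p) + 1"
    using Suc p by (simp add: integral_add)
  have "measure_pmf.expectation (binomial_pmf (Suc n) p) real = p * (n * p + 1) + (1 - p) * (n * p)"
    using expectation_binomial_pmf_Suc[OF p, of n real] Suc p by (simp add: integral_add)
  moreover have "measure_pmf.expectation (binomial_pmf (Suc n) p) (\<lambda>k. (real k)\<^sup>2)
      = p * (n * p * (1 - p) + (n * p)\<^sup>2 + 2 * (n * p) + 1) + (1 - p) * (n * p * (1 - p) + (n * p)\<^sup>2)"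
    using expectation_binomial_pmf_Suc[OF p, of n "\<lambda>k. (real k)\<^sup>2"] sq Suc by simp
  ultimately show ?case by (simp add: algebra_simps power2_eq_square)
qed

lemma expectation_binomial_pmf_sq_dev:
  assumes p: "p \<in> {0..1}" and n: "n > 0"
  shows "measure_pmf.expectation (binomial_pmf n p) (\<lambda>s. (real s / n - p)\<^sup>2) = p * (1 - p) / n"
proof -
  have eq: "(\<lambda>s. (real s / n - p)\<^sup>2) = (\<lambda>s. (1 / n\<^sup>2) * (real s)\<^sup>2 - (2 * p / n) * real s + p\<^sup>2)"
    using n by (auto simp: fun_eq_iff field_simps power2_eq_square)
  have "measure_pmf.expectation (binomial_pmf n p) (\<lambda>s. (real s / n - p)\<^sup>2)
     = (1 / n\<^sup>2) * (n * p * (1 - p) + (n * p)\<^sup>2) - (2 * p / n) * (n * p) + p\<^sup>2"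
    unfolding eq using p expectation_binomial_pmf_moments[OF p, of n]
    by (simp add: integral_add integral_diff)
  also have "\<dots> = p * (1 - p) / n" using n by (simp add: field_simps power2_eq_square)
  finally show ?thesis .
qed

lemma expectation_coord_dev_binomial_le:
  assumes p: "p \<in> {0..1}" and n: "n > 0" and b: "0 < b" "b \<le> p"
  shows "measure_pmf.expectation (binomial_pmf n p) (\<lambda>s. coord_dev p b (real s / n))
           \<le> 5 * (sqrt (b / n) + 1 / n)"
proof -
  let ?E = "measure_pmf.expectation (binomial_pmf n p)"
  have fin: "finite (set_pmf (binomial_pmf n p))" using p by auto
  have nr: "real n > 0" using n by simp
  have var: "?E (\<lambda>s. (real s / n - p)\<^sup>2) = p * (1 - p) / n"
    by (rule expectation_binomial_pmf_sq_dev[OF p n])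
  have prod_le: "p * (1 - p) \<le> p" "p * (1 - p) \<le> 1 - p"
    using p by (auto intro: mult_left_le mult_left_le_one_le)
  then have var_le: "p * (1 - p) / n \<le> p * (1 / n)" "p * (1 - p) / n \<le> (1 - p) * (1 / n)"
    using nr by (auto intro: divide_right_mono)
  have central: "?E (\<lambda>s. if p \<le> b \<or> 1 - p \<le> b then \<bar>real s / n - p\<bar> else 0) \<le> sqrt (b / n)"
  proof (cases "p \<le> b \<or> 1 - p \<le> b")
    case True
    have "?E (\<lambda>s. \<bar>real s / n - p\<bar>) \<le> sqrt (p * (1 - p) / n)"
      using expectation_abs_le_sqrt_second_moment[OF fin, of "\<lambda>s. real s / n - p"] var by simp
    also have "\<dots> \<le> sqrt (b / n)"
      using True prod_le nr by (intro real_sqrt_le_mono divide_right_mono) auto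
    finally show ?thesis using True by simp
  qed (use b nr in simp)
  have lower: "?E (\<lambda>s. max 0 (b - real s / n)) \<le> 2 * sqrt (b / n) + 2 / n"
    using expectation_pos_part_le[OF fin b, of "\<lambda>s. real s / n" "1 / n"] var var_le by simp
  have upper: "?E (\<lambda>s. if b \<le> 1 - p then max 0 (b - (1 - real s / n)) else 0) \<le> 2 * sqrt (b / n) + 2 / n"
  proof (cases "b \<le> 1 - p")
    case True
    have "0 \<le> 1 - real s / n" if "s \<in> set_pmf (binomial_pmf n p)" for s
      using that p nr by (auto simp: set_pmf_binomial_eq field_simps split: if_splits)
    moreover have "?E (\<lambda>s. (1 - real s / n - (1 - p))\<^sup>2) \<le> (1 - p) * (1 / n)"
      using var var_le by (simp add: power2_commute)
    ultimately have "?E (\<lambda>s. max 0 (b - (1 - real s / n))) \<le> 2 * sqrt (b / n) + 2 / n"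
      using expectation_pos_part_le[OF fin b(1) True, of "\<lambda>s. 1 - real s / n" "1 / n"] by simp
    then show ?thesis using True by simp
  qed (use b nr in simp)
  have "?E (\<lambda>s. coord_dev p b (real s / n)) =
      ?E (\<lambda>s. if p \<le> b \<or> 1 - p \<le> b then \<bar>real s / n - p\<bar> else 0) + ?E (\<lambda>s. max 0 (b - real s / n))
      + ?E (\<lambda>s. if b \<le> 1 - p then max 0 (b - (1 - real s / n)) else 0)"
    unfolding coord_dev_def using p by (simp add: integral_add)
  also have "\<dots> \<le> 5 * (sqrt (b / n) + 1 / n)"
  proof -
    have "2 / real n = 2 * (1 / n)" "0 < 1 / real n" using nr by auto
    then show ?thesis using central lower upper by (smt (verit))
  qed
  finally show ?thesis .
qed

lemma expectation_mu_coordinate: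
  fixes h :: "real \<Rightarrow> real"
  shows "measure_pmf.expectation (mu n u) (\<lambda>w. h (w k)) =
         measure_pmf.expectation (binomial_pmf n (u k)) (\<lambda>s. h (real s / real n))"
proof -
  have "measure_pmf.expectation (mu n u) (\<lambda>w. h (w k)) =
        measure_pmf.expectation (map_pmf (\<lambda>S. S k) (Pi_pmf UNIV 0 (\<lambda>j. binomial_pmf n (u j))))
          (\<lambda>s. h (real s / real n))"
    unfolding mu_def by simp
  also have "map_pmf (\<lambda>S. S k) (Pi_pmf UNIV 0 (\<lambda>j. binomial_pmf n (u j))) = binomial_pmf n (u k)"
    by (subst Pi_pmf_component) auto
  finally show ?thesis .
qed

lemma set_pmf_mu:
  "set_pmf (mu n u) = (\<lambda>S j. real (S j) / real n) ` PiE_dflt UNIV 0 (\<lambda>j. set_pmf (binomial_pmf n (u j)))"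
  unfolding mu_def set_map_pmf by (simp add: set_Pi_pmf comp_def)

lemma finite_set_pmf_mu:
  assumes "\<And>j. 0 \<le> u j \<and> u j \<le> 1"
  shows "finite (set_pmf (mu n u))"
  unfolding set_pmf_mu using assms by (intro finite_imageI finite_PiE_dflt) auto

lemma set_pmf_mu_unit_cube:
  assumes "n > 0" and "\<And>j. 0 \<le> u j \<and> u j \<le> 1" and "w \<in> set_pmf (mu n u)"
  shows "0 \<le> w j \<and> w j \<le> 1"
proof -
  obtain S where S: "S \<in> PiE_dflt UNIV 0 (\<lambda>j. set_pmf (binomial_pmf n (u j)))"
    and w: "w = (\<lambda>j. real (S j) / real n)"
    using assms(3) unfolding set_pmf_mu by blast
  have "S j \<in> set_pmf (binomial_pmf n (u j))" using S by (auto simp: PiE_dflt_def)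
  then have "S j \<le> n"
    using assms(2)[of j] by (auto simp: set_pmf_binomial_eq split: if_splits)
  then show ?thesis using w assms(1) by (simp add: field_simps)
qed

lemma rate_bound:
  fixes b n \<gamma> :: real
  assumes n: "1 \<le> n" and b: "n powr (-\<gamma>) \<le> b" and "\<gamma> < 1"
  shows "(sqrt (b / n) + 1 / n) / b \<le> 2 * n powr (-(1 - \<gamma>) / 2)"
proof -
  define t where "t = n powr (-(1 - \<gamma>) / 2)"
  have "0 < n powr (-\<gamma>)" using n by simp
  then have "0 < b" using b by linarith
  have "0 \<le> t" "t \<le> 1"
    using n \<open>\<gamma> < 1\<close> powr_mono[of "-(1 - \<gamma>) / 2" 0 n] by (auto simp: t_def)
  have "t\<^sup>2 = n powr (\<gamma> - 1)"
    unfolding t_def power2_eq_square powr_add[symmetric] by simp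
  have "0 < n powr (-\<gamma>) * n" using n by simp
  then have "1 / (b * n) \<le> 1 / (n powr (-\<gamma>) * n)"
    using b n \<open>0 < b\<close> by (intro divide_left_mono mult_right_mono mult_pos_pos) auto
  also have "\<dots> = n powr (\<gamma> - 1)"
    using n by (simp add: powr_minus_divide powr_diff)
  finally have inv_le: "1 / (b * n) \<le> t\<^sup>2" using \<open>t\<^sup>2 = _\<close> by simp
  have "sqrt (b / n) / b = sqrt (1 / (b * n))"
  proof -
    have "1 / (b * n) = (b / n) / b\<^sup>2" using \<open>0 < b\<close> n by (simp add: field_simps power2_eq_square)
    then have "sqrt (1 / (b * n)) = sqrt (b / n) / sqrt (b\<^sup>2)" by (simp only: real_sqrt_divide)
    then show ?thesis using \<open>0 < b\<close> by simp
  qed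
  also have "\<dots> \<le> t" using inv_le \<open>0 \<le> t\<close> by (intro real_le_lsqrt) auto
  finally have "sqrt (b / n) / b \<le> t" .
  moreover have "t\<^sup>2 \<le> t" using \<open>0 \<le> t\<close> \<open>t \<le> 1\<close> by (simp add: power2_eq_square mult_left_le_one_le)
  moreover have "(sqrt (b / n) + 1 / n) / b = sqrt (b / n) / b + 1 / (b * n)"
    by (simp add: add_divide_distrib)
  ultimately show ?thesis using inv_le unfolding t_def by linarith
qed

lemma expectation_gfun_ratio_deviation_le:
  fixes u :: "'d::finite \<Rightarrow> real"
  assumes d: "CARD('d) \<ge> 2" and \<omega>: "0 < \<omega>" "\<omega> < 1" and n: "n > 0"
    and u: "\<And>j. 0 \<le> u j \<and> u j \<le> 1" and b: "0 < gfun u"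
  shows "\<bar>measure_pmf.expectation (mu n u) (\<lambda>w. gfun w powr \<omega> / gfun u powr \<omega>) - 1\<bar>
           \<le> 5 * CARD('d) * ((sqrt (gfun u / n) + 1 / n) / gfun u)"
proof -
  let ?E = "measure_pmf.expectation (mu n u)"
  have int: "integrable (mu n u) f" for f :: "_ \<Rightarrow> real"
    by (rule integrable_measure_pmf_finite[OF finite_set_pmf_mu[OF u]])
  have sum_bound: "?E (\<lambda>w. \<Sum>k\<in>UNIV. coord_dev (u k) (gfun u) (w k))
      \<le> 5 * CARD('d) * (sqrt (gfun u / n) + 1 / n)"
  proof -
    have "?E (\<lambda>w. \<Sum>k\<in>UNIV. coord_dev (u k) (gfun u) (w k))
        = (\<Sum>k\<in>UNIV. measure_pmf.expectation (binomial_pmf n (u k))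
             (\<lambda>s. coord_dev (u k) (gfun u) (real s / n)))"
      by (simp add: Bochner_Integration.integral_sum int expectation_mu_coordinate)
    also have "\<dots> \<le> (\<Sum>k\<in>(UNIV::'d set). 5 * (sqrt (gfun u / n) + 1 / n))"
      using u b n gfun_le[of u] by (intro sum_mono expectation_coord_dev_binomial_le) auto
    finally show ?thesis by (simp add: algebra_simps)
  qed
  have "\<bar>?E (\<lambda>w. gfun w powr \<omega> / gfun u powr \<omega>) - 1\<bar> = \<bar>?E (\<lambda>w. gfun w powr \<omega> / gfun u powr \<omega> - 1)\<bar>"
    by (simp add: int)
  also have "\<dots> \<le> ?E (\<lambda>w. \<bar>gfun w powr \<omega> / gfun u powr \<omega> - 1\<bar>)"
    by (rule integral_abs_bound)
  also have "\<dots> \<le> ?E (\<lambda>w. \<bar>gfun w - gfun u\<bar> / gfun u)"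
    using \<omega> b gfun_nonneg[OF d set_pmf_mu_unit_cube[OF n u]]
    by (intro integral_mono_AE int AE_pmfI abs_powr_div_powr_minus_one_le) auto
  also have "\<dots> = ?E (\<lambda>w. \<bar>gfun w - gfun u\<bar>) / gfun u" by simp
  also have "\<dots> \<le> ?E (\<lambda>w. \<Sum>k\<in>UNIV. coord_dev (u k) (gfun u) (w k)) / gfun u"
    using b by (intro divide_right_mono integral_mono int abs_gfun_diff_le_sum_coord_dev[OF d]) auto
  also have "\<dots> \<le> 5 * CARD('d) * (sqrt (gfun u / n) + 1 / n) / gfun u"
    using sum_bound b by (intro divide_right_mono) auto
  finally show ?thesis by simp
qed

theorem lemma3:
  fixes \<omega> \<gamma> :: real
  assumes "CARD('d::finite) \<ge> 2"
    and "0 < \<omega>" and "\<omega> < 1/2"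
    and "1 / (2 * (1 - \<omega>)) < \<gamma>" and "\<gamma> < 1"
  shows "\<exists>C. \<forall>\<^sub>F n in sequentially.
           \<forall>u::'d \<Rightarrow> real. (\<forall>j. 0 \<le> u j \<and> u j \<le> 1) \<and> gfun u \<ge> real n powr (-\<gamma>) \<longrightarrow>
             \<bar>measure_pmf.expectation (mu n u) (\<lambda>w. gfun w powr \<omega> / gfun u powr \<omega>) - 1\<bar>
               \<le> C * (real n powr (-(1 - \<gamma>) / 2) * ln (real n))"
proof -
  define C where "C = 10 * real CARD('d)"
  have "\<bar>measure_pmf.expectation (mu n u) (\<lambda>w. gfun w powr \<omega> / gfun u powr \<omega>) - 1\<bar>
          \<le> C * (real n powr (-(1 - \<gamma>) / 2) * ln (real n))"
    if n: "n \<ge> 3" and u: "\<forall>j. 0 \<le> u j \<and> u j \<le> 1" and gu: "gfun u \<ge> real n powr (-\<gamma>)"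
    for n :: nat and u :: "'d \<Rightarrow> real"
  proof -
    have "0 < real n powr (-\<gamma>)" using n by simp
    then have "0 < gfun u" using gu by linarith
    have "1 \<le> ln (real n)" using n exp_le by (subst ln_ge_iff) auto
    have "\<bar>measure_pmf.expectation (mu n u) (\<lambda>w. gfun w powr \<omega> / gfun u powr \<omega>) - 1\<bar>
            \<le> 5 * CARD('d) * ((sqrt (gfun u / n) + 1 / n) / gfun u)"
      using assms(1-3) n u \<open>0 < gfun u\<close> by (intro expectation_gfun_ratio_deviation_le) auto
    also have "\<dots> \<le> 5 * CARD('d) * (2 * real n powr (-(1 - \<gamma>) / 2))"
      using n gu assms(5) by (intro mult_left_mono rate_bound) auto
    also have "\<dots> \<le> C * (real n powr (-(1 - \<gamma>) / 2) * ln (real n))"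
      using \<open>1 \<le> ln (real n)\<close> by (simp add: C_def mult_le_cancel_left1)
    finally show ?thesis .
  qed
  then show ?thesis by (intro exI[of _ C] eventually_mono[OF eventually_ge_at_top[of 3]]) blast
qed

end
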